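(* Let $(X,Y)$ be a splitting of a finite Weyl group $W$ with simple roots $\Delta$. Then: (1) $X$ has a unique maximal element $x_0$ under left weak order and $Y$ has a unique maximal element $y_0$ under right weak order, and $x_0y_0=w_0$. (2) For every $J\subseteq\Delta$, $(X\cap W_J,\,Y\cap W_J)$ is a splitting of $W_J$.
   Context: $W$ is the Weyl group of a finite crystallographic root system with simple roots $\Delta$, generated by simple reflections $s_\alpha$; $\ell$ is Coxeter length and $w_0$ is the longest element. Left weak order: $v\leq_L w$ iff $w=zv$ with $\ell(w)=\ell(z)+\ell(v)$; right weak order: $v\leq_R w$ iff $w=vz$ with $\ell(w)=\ell(v)+\ell(z)$. For $J\subseteq\Delta$, $W_J$ is the parabolic subgroup generated by $\{s_\alpha:\alpha\in J\}$, with the restricted length function. A pair $(X,Y)$ of subsets of a group $G$ (here $W$ or $W_J$) is a splitting of $G$ if the map $X\times Y\to G$, $(x,y)\mapsto xy$, is a bijection with $\ell(xy)=\ell(x)+\ell(y)$ for all $x\in X$, $y\in Y$. *)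

theory Defs
  imports "HOL-Analysis.Analysis"
begin

definition refl_vec :: "'a::euclidean_space \<Rightarrow> 'a \<Rightarrow> 'a" where
  "refl_vec \<alpha> v = v - ((2 * (v \<bullet> \<alpha>)) / (\<alpha> \<bullet> \<alpha>)) *\<^sub>R \<alpha>"

definition root_system :: "'a::euclidean_space set \<Rightarrow> bool" where
  "root_system \<Phi> \<longleftrightarrow> finite \<Phi> \<and> 0 \<notin> \<Phi> \<and> span \<Phi> = UNIV
     \<and> (\<forall>\<alpha>\<in>\<Phi>. \<forall>\<beta>\<in>\<Phi>. refl_vec \<alpha> \<beta> \<in> \<Phi>)
     \<and> (\<forall>\<alpha>\<in>\<Phi>. \<forall>\<beta>\<in>\<Phi>. (2 * (\<beta> \<bullet> \<alpha>)) / (\<alpha> \<bullet> \<alpha>) \<in> \<int>)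
     \<and> (\<forall>\<alpha>\<in>\<Phi>. \<forall>c::real. c *\<^sub>R \<alpha> \<in> \<Phi> \<longrightarrow> c = 1 \<or> c = -1)"

definition simple_roots :: "'a::euclidean_space set \<Rightarrow> 'a set \<Rightarrow> bool" where
  "simple_roots \<Phi> \<Delta> \<longleftrightarrow> \<Delta> \<subseteq> \<Phi> \<and> independent \<Delta>
     \<and> (\<forall>\<beta>\<in>\<Phi>. \<exists>c::'a \<Rightarrow> real. \<beta> = (\<Sum>\<alpha>\<in>\<Delta>. c \<alpha> *\<^sub>R \<alpha>)
          \<and> ((\<forall>\<alpha>\<in>\<Delta>. c \<alpha> \<ge> 0) \<or> (\<forall>\<alpha>\<in>\<Delta>. c \<alpha> \<le> 0)))"

definition word_prod :: "'a::euclidean_space list \<Rightarrow> 'a \<Rightarrow> 'a" where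
  "word_prod ws = foldr (\<lambda>\<alpha> f. refl_vec \<alpha> \<circ> f) ws id"

text \<open>Group generated by the reflections s_alpha, alpha in S (W for S = Delta, W_J for S = J).\<close>
definition refl_group :: "'a::euclidean_space set \<Rightarrow> ('a \<Rightarrow> 'a) set" where
  "refl_group S = {word_prod ws | ws. set ws \<subseteq> S}"

definition cox_len :: "'a::euclidean_space set \<Rightarrow> ('a \<Rightarrow> 'a) \<Rightarrow> nat" where
  "cox_len \<Delta> w = (LEAST n. \<exists>ws. set ws \<subseteq> \<Delta> \<and> length ws = n \<and> w = word_prod ws)"

definition longest :: "'a::euclidean_space set \<Rightarrow> ('a \<Rightarrow> 'a)" where
  "longest \<Delta> = (THE w. w \<in> refl_group \<Delta> \<and> (\<forall>v\<in>refl_group \<Delta>. cox_len \<Delta> v \<le> cox_len \<Delta> w))"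

definition left_weak :: "'a::euclidean_space set \<Rightarrow> ('a \<Rightarrow> 'a) \<Rightarrow> ('a \<Rightarrow> 'a) \<Rightarrow> bool" where
  "left_weak \<Delta> v w \<longleftrightarrow> (\<exists>z\<in>refl_group \<Delta>. w = z \<circ> v \<and> cox_len \<Delta> w = cox_len \<Delta> z + cox_len \<Delta> v)"

definition right_weak :: "'a::euclidean_space set \<Rightarrow> ('a \<Rightarrow> 'a) \<Rightarrow> ('a \<Rightarrow> 'a) \<Rightarrow> bool" where
  "right_weak \<Delta> v w \<longleftrightarrow> (\<exists>z\<in>refl_group \<Delta>. w = v \<circ> z \<and> cox_len \<Delta> w = cox_len \<Delta> v + cox_len \<Delta> z)"

definition splitting :: "('b \<Rightarrow> 'b) set \<Rightarrow> (('b \<Rightarrow> 'b) \<Rightarrow> nat) \<Rightarrow> ('b \<Rightarrow> 'b) set \<Rightarrow> ('b \<Rightarrow> 'b) set \<Rightarrow> bool" where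
  "splitting G len X Y \<longleftrightarrow> X \<subseteq> G \<and> Y \<subseteq> G
     \<and> bij_betw (\<lambda>(x, y). x \<circ> y) (X \<times> Y) G
     \<and> (\<forall>x\<in>X. \<forall>y\<in>Y. len (x \<circ> y) = len x + len y)"

end

theory Submission
  imports Defs
begin

(* The Coxeter length of w equals the number of positive roots that w sends to negative roots.
   Consequently the longest element w0 is the unique element of W sending every positive root to
   a negative one, and len (w0 v) + len v = len w0 = len (v w0) + len v for all v in W.
   Write w0 = x0 y0 with x0 in X, y0 in Y.  For x in X, the element x0 x^-1 equals
   w0 (x y0)^-1, whose length is len w0 - len x - len y0 = len x0 - len x; hence x <=_L x0.
   Symmetrically y <=_R y0 for y in Y, and antisymmetry of the weak orders makes x0, y0 the unique
   maximal elements.  For J a subset of Delta, a simple reflection s_alpha with alpha not in J does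
   not change the alpha-coordinate, so every reduced word of an element of W_J uses only letters
   from J.  Concatenating reduced words of x and y with x y in W_J gives a reduced word of x y,
   which forces x and y into W_J. *)

lemma linear_refl_vec: "linear (refl_vec a)"
  unfolding refl_vec_def
  by (auto simp: linear_iff inner_add_left add_divide_distrib scaleR_add_left algebra_simps)

lemma refl_vec_self: "a \<noteq> 0 \<Longrightarrow> refl_vec a a = - a"
  by (simp add: refl_vec_def scaleR_2)

lemma refl_vec_refl_vec [simp]: "a \<noteq> 0 \<Longrightarrow> refl_vec a (refl_vec a v) = v"
  unfolding refl_vec_def by (simp add: inner_diff_left algebra_simps field_simps)

lemma refl_vec_comp_self: "a \<noteq> 0 \<Longrightarrow> refl_vec a \<circ> refl_vec a = id"
  by (simp add: fun_eq_iff)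

lemma mem_image_refl_vec_iff: "a \<noteq> 0 \<Longrightarrow> x \<in> refl_vec a ` A \<longleftrightarrow> refl_vec a x \<in> A"
  using image_eqI[of x "refl_vec a" "refl_vec a x" A] by auto

lemma inner_refl_vec: "a \<noteq> 0 \<Longrightarrow> refl_vec a u \<bullet> refl_vec a v = u \<bullet> v"
  unfolding refl_vec_def
  by (simp add: inner_diff_left inner_diff_right algebra_simps field_simps inner_commute)

lemma orthogonal_map_refl_vec:
  assumes "linear u" and "\<And>x y. u x \<bullet> u y = x \<bullet> y"
  shows "u (refl_vec a v) = refl_vec (u a) (u v)"
  unfolding refl_vec_def using assms by (simp add: linear_diff linear_scale)

lemma word_prod_Nil [simp]: "word_prod [] = id"
  by (simp add: word_prod_def)

lemma word_prod_Cons [simp]: "word_prod (a # ws) = refl_vec a \<circ> word_prod ws"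
  by (simp add: word_prod_def)

lemma word_prod_append: "word_prod (xs @ ys) = word_prod xs \<circ> word_prod ys"
  by (induction xs) (auto simp: comp_assoc)

lemma word_prod_snoc: "word_prod (ws @ [a]) = word_prod ws \<circ> refl_vec a"
  by (simp add: word_prod_append)

lemma linear_word_prod: "linear (word_prod ws)"
proof (induction ws)
  case (Cons a ws)
  then show ?case
    using linear_compose[OF Cons.IH linear_refl_vec[of a]] by (simp add: comp_def)
qed (simp add: id_def[symmetric] linear_id)

lemma inner_word_prod: "0 \<notin> set ws \<Longrightarrow> word_prod ws x \<bullet> word_prod ws y = x \<bullet> y"
  by (induction ws arbitrary: x y) (auto simp: inner_refl_vec)

lemma word_prod_rev_comp: "0 \<notin> set ws \<Longrightarrow> word_prod (rev ws) \<circ> word_prod ws = id"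
proof (induction ws)
  case (Cons a ws)
  then have "a \<noteq> 0" and "0 \<notin> set ws"
    by auto
  then have IH: "word_prod (rev ws) \<circ> word_prod ws = id"
    using Cons.IH by blast
  have "word_prod (rev (a # ws)) \<circ> word_prod (a # ws)
      = word_prod (rev ws) \<circ> (refl_vec a \<circ> refl_vec a) \<circ> word_prod ws"
    by (simp add: word_prod_snoc comp_assoc)
  also have "\<dots> = id"
    using IH by (simp add: refl_vec_comp_self[OF \<open>a \<noteq> 0\<close>])
  finally show ?case .
qed simp

lemma
  assumes "0 \<notin> set ws"
  shows inv_word_prod: "inv (word_prod ws) = word_prod (rev ws)"
    and bij_word_prod: "bij (word_prod ws)"
proof -
  have "word_prod ws \<circ> word_prod (rev ws) = id"
    using word_prod_rev_comp[of "rev ws"] assms by simp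
  with word_prod_rev_comp[OF assms]
  show "inv (word_prod ws) = word_prod (rev ws)" "bij (word_prod ws)"
    by (simp_all add: inv_unique_comp o_bij)
qed

lemma refl_groupE:
  assumes "w \<in> refl_group S"
  obtains ws where "set ws \<subseteq> S" and "w = word_prod ws"
  using assms unfolding refl_group_def by blast

lemma word_prod_in_refl_group: "set ws \<subseteq> S \<Longrightarrow> word_prod ws \<in> refl_group S"
  unfolding refl_group_def by blast

lemma id_in_refl_group: "id \<in> refl_group S"
  using word_prod_in_refl_group[of "[]"] by simp

lemma refl_vec_in_refl_group: "a \<in> S \<Longrightarrow> refl_vec a \<in> refl_group S"
  using word_prod_in_refl_group[of "[a]"] by simp

lemma comp_in_refl_group:
  assumes "u \<in> refl_group S" and "v \<in> refl_group S"
  shows "u \<circ> v \<in> refl_group S"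
proof -
  obtain us vs where "set us \<subseteq> S" "u = word_prod us" "set vs \<subseteq> S" "v = word_prod vs"
    using assms by (meson refl_groupE)
  then show ?thesis
    using word_prod_in_refl_group[of "us @ vs"] by (simp add: word_prod_append)
qed

lemma refl_group_mono: "S \<subseteq> T \<Longrightarrow> refl_group S \<subseteq> refl_group T"
  unfolding refl_group_def by blast

lemma linear_refl_group: "w \<in> refl_group S \<Longrightarrow> linear w"
  by (erule refl_groupE) (simp add: linear_word_prod)

lemma
  assumes "0 \<notin> S" and "w \<in> refl_group S"
  shows inv_in_refl_group: "inv w \<in> refl_group S"
    and bij_refl_group: "bij w"
proof -
  obtain ws where ws: "set ws \<subseteq> S" "w = word_prod ws"
    using assms(2) by (rule refl_groupE)
  then have "0 \<notin> set ws"
    using assms(1) by blast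
  with ws show "inv w \<in> refl_group S" "bij w"
    by (simp_all add: inv_word_prod bij_word_prod word_prod_in_refl_group)
qed

lemma exists_reduced_word:
  assumes "w \<in> refl_group D"
  obtains ws where "set ws \<subseteq> D" and "length ws = cox_len D w" and "w = word_prod ws"
proof -
  obtain ws where "set ws \<subseteq> D" "w = word_prod ws"
    using assms by (rule refl_groupE)
  then have "\<exists>n ws. set ws \<subseteq> D \<and> length ws = n \<and> w = word_prod ws"
    by blast
  from LeastI_ex[OF this] show ?thesis
    using that unfolding cox_len_def by blast
qed

lemma cox_len_le_length: "set ws \<subseteq> D \<Longrightarrow> cox_len D (word_prod ws) \<le> length ws"
  unfolding cox_len_def by (rule Least_le) blast

lemma cox_len_eq_0D:
  assumes "w \<in> refl_group D" and "cox_len D w = 0"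
  shows "w = id"
proof -
  obtain ws where "length ws = cox_len D w" and "w = word_prod ws"
    using assms(1) by (rule exists_reduced_word)
  with assms(2) show ?thesis
    by simp
qed

lemma cox_len_inv:
  assumes "0 \<notin> D" and "w \<in> refl_group D"
  shows "cox_len D (inv w) = cox_len D w"
proof -
  have le: "cox_len D (inv u) \<le> cox_len D u" if u: "u \<in> refl_group D" for u
  proof -
    obtain ws where ws: "set ws \<subseteq> D" "length ws = cox_len D u" "u = word_prod ws"
      using u by (rule exists_reduced_word)
    moreover have "0 \<notin> set ws"
      using ws(1) assms(1) by blast
    ultimately have "inv u = word_prod (rev ws)"
      by (simp add: inv_word_prod)
    then show ?thesis
      using cox_len_le_length[of "rev ws" D] ws by simp
  qed
  show ?thesis
    using le[OF assms(2)] le[OF inv_in_refl_group[OF assms]] inv_inv_eq[OF bij_refl_group[OF assms]]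
    by simp
qed

lemma cox_len_id: "cox_len D id = 0"
  using cox_len_le_length[of "[]" D] by simp

lemma left_weak_antisym:
  assumes "left_weak D v w" and "left_weak D w v"
  shows "v = w"
proof -
  obtain z where z: "z \<in> refl_group D" "w = z \<circ> v" "cox_len D w = cox_len D z + cox_len D v"
    using assms(1) unfolding left_weak_def by blast
  moreover have "cox_len D v \<ge> cox_len D w"
    using assms(2) unfolding left_weak_def by auto
  ultimately have "cox_len D z = 0"
    by simp
  then show ?thesis
    using cox_len_eq_0D[OF z(1)] z(2) by simp
qed

lemma right_weak_antisym:
  assumes "right_weak D v w" and "right_weak D w v"
  shows "v = w"
proof -
  obtain z where z: "z \<in> refl_group D" "w = v \<circ> z" "cox_len D w = cox_len D v + cox_len D z"
    using assms(1) unfolding right_weak_def by blast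
  moreover have "cox_len D v \<ge> cox_len D w"
    using assms(2) unfolding right_weak_def by auto
  ultimately have "cox_len D z = 0"
    by simp
  then show ?thesis
    using cox_len_eq_0D[OF z(1)] z(2) by simp
qed

lemma maximal_iff_eq_greatest:
  assumes "m \<in> X" and "\<And>x. x \<in> X \<Longrightarrow> R x m" and "\<And>x y. R x y \<Longrightarrow> R y x \<Longrightarrow> x = y"
  shows "m' \<in> X \<and> (\<forall>x\<in>X. R m' x \<longrightarrow> x = m') \<longleftrightarrow> m' = m"
  using assms by metis

section \<open>Positive and negative roots\<close>

locale based_root_system =
  fixes \<Phi> \<Delta> :: "'a::euclidean_space set"
  assumes root_system: "root_system \<Phi>"
    and simple_roots: "simple_roots \<Phi> \<Delta>"
begin

abbreviation W :: "('a \<Rightarrow> 'a) set" where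
  "W \<equiv> refl_group \<Delta>"

abbreviation len :: "('a \<Rightarrow> 'a) \<Rightarrow> nat" where
  "len \<equiv> cox_len \<Delta>"

abbreviation coord :: "'a \<Rightarrow> 'a \<Rightarrow> real" where
  "coord \<gamma> v \<equiv> representation \<Delta> v \<gamma>"

lemma finite_roots: "finite \<Phi>"
  and zero_notin_roots: "0 \<notin> \<Phi>"
  and span_roots: "span \<Phi> = UNIV"
  and refl_vec_root: "\<alpha> \<in> \<Phi> \<Longrightarrow> \<beta> \<in> \<Phi> \<Longrightarrow> refl_vec \<alpha> \<beta> \<in> \<Phi>"
  and root_multiple: "\<alpha> \<in> \<Phi> \<Longrightarrow> c *\<^sub>R \<alpha> \<in> \<Phi> \<Longrightarrow> c = 1 \<or> c = -1"
  using root_system by (auto simp: root_system_def)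

lemma simple_subset_roots: "\<Delta> \<subseteq> \<Phi>"
  and independent_simple: "independent \<Delta>"
  and root_expansion: "\<beta> \<in> \<Phi> \<Longrightarrow> \<exists>c. \<beta> = (\<Sum>\<alpha>\<in>\<Delta>. c \<alpha> *\<^sub>R \<alpha>)
      \<and> ((\<forall>\<alpha>\<in>\<Delta>. c \<alpha> \<ge> 0) \<or> (\<forall>\<alpha>\<in>\<Delta>. c \<alpha> \<le> 0))"
  using simple_roots by (auto simp: simple_roots_def)

lemma finite_simple: "finite \<Delta>"
  using finite_roots simple_subset_roots by (rule finite_subset[rotated])

lemma zero_notin_simple: "0 \<notin> \<Delta>"
  using zero_notin_roots simple_subset_roots by blast

lemma uminus_root:
  assumes "\<beta> \<in> \<Phi>"
  shows "- \<beta> \<in> \<Phi>"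
proof -
  have "\<beta> \<noteq> 0"
    using assms zero_notin_roots by blast
  then show ?thesis
    using refl_vec_root[OF assms assms] by (simp add: refl_vec_self)
qed

lemma span_simple: "span \<Delta> = UNIV"
proof -
  have "\<beta> \<in> span \<Delta>" if \<beta>: "\<beta> \<in> \<Phi>" for \<beta>
  proof -
    obtain c where "\<beta> = (\<Sum>\<alpha>\<in>\<Delta>. c \<alpha> *\<^sub>R \<alpha>)"
      using root_expansion[OF \<beta>] by blast
    moreover have "(\<Sum>\<alpha>\<in>\<Delta>. c \<alpha> *\<^sub>R \<alpha>) \<in> span \<Delta>"
      by (intro span_sum span_scale) (simp add: span_base)
    ultimately show ?thesis
      by simp
  qed
  then have "\<Phi> \<subseteq> span \<Delta>"
    by blast
  then show ?thesis
    using span_roots span_minimal[OF _ subspace_span] by blast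
qed

lemma linear_coord: "linear (coord \<gamma>)"
  using bounded_linear_representation[OF independent_simple span_simple]
  by (rule bounded_linear.linear)

lemma coord_simple: "\<alpha> \<in> \<Delta> \<Longrightarrow> coord \<gamma> \<alpha> = (if \<gamma> = \<alpha> then 1 else 0)"
  by (simp add: representation_basis[OF independent_simple])

lemma simple_expansion: "(\<Sum>\<gamma>\<in>\<Delta>. coord \<gamma> v *\<^sub>R \<gamma>) = v"
  by (simp add: sum_representation_eq independent_simple span_simple finite_simple)

lemma coord_expansion: "\<gamma> \<in> \<Delta> \<Longrightarrow> coord \<gamma> (\<Sum>\<alpha>\<in>\<Delta>. c \<alpha> *\<^sub>R \<alpha>) = c \<gamma>"
  by (simp add: linear_sum[OF linear_coord] linear_scale[OF linear_coord] coord_simple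
      finite_simple if_distrib cong: if_cong)

lemma coord_refl_vec: "\<alpha> \<in> \<Delta> \<Longrightarrow> \<gamma> \<noteq> \<alpha> \<Longrightarrow> coord \<gamma> (refl_vec \<alpha> v) = coord \<gamma> v"
  unfolding refl_vec_def
  by (simp add: linear_diff[OF linear_coord] linear_scale[OF linear_coord] coord_simple)

definition pos_roots :: "'a set" where
  "pos_roots = {\<beta>\<in>\<Phi>. \<forall>\<gamma>\<in>\<Delta>. coord \<gamma> \<beta> \<ge> 0}"

definition neg_roots :: "'a set" where
  "neg_roots = {\<beta>\<in>\<Phi>. \<forall>\<gamma>\<in>\<Delta>. coord \<gamma> \<beta> \<le> 0}"

lemma root_pos_or_neg:
  assumes "\<beta> \<in> \<Phi>"
  shows "\<beta> \<in> pos_roots \<or> \<beta> \<in> neg_roots"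
proof -
  obtain c where c: "\<beta> = (\<Sum>\<alpha>\<in>\<Delta>. c \<alpha> *\<^sub>R \<alpha>)" "(\<forall>\<alpha>\<in>\<Delta>. c \<alpha> \<ge> 0) \<or> (\<forall>\<alpha>\<in>\<Delta>. c \<alpha> \<le> 0)"
    using root_expansion[OF assms] by blast
  then have "coord \<gamma> \<beta> = c \<gamma>" if "\<gamma> \<in> \<Delta>" for \<gamma>
    using coord_expansion[OF that] by simp
  with c(2) assms show ?thesis
    unfolding pos_roots_def neg_roots_def by auto
qed

lemma pos_roots_inter_neg_roots: "pos_roots \<inter> neg_roots = {}"
proof -
  have "\<beta> = 0" if "\<beta> \<in> pos_roots" "\<beta> \<in> neg_roots" for \<beta>
  proof -
    have "\<forall>\<gamma>\<in>\<Delta>. coord \<gamma> \<beta> = 0"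
      using that unfolding pos_roots_def neg_roots_def by (auto intro: antisym)
    then show ?thesis
      using simple_expansion[of \<beta>] by simp
  qed
  then show ?thesis
    using zero_notin_roots unfolding pos_roots_def by blast
qed

lemma uminus_pos_roots_iff: "- \<beta> \<in> pos_roots \<longleftrightarrow> \<beta> \<in> neg_roots"
  and uminus_neg_roots_iff: "- \<beta> \<in> neg_roots \<longleftrightarrow> \<beta> \<in> pos_roots"
  using uminus_root[of \<beta>] uminus_root[of "- \<beta>"]
  by (auto simp: pos_roots_def neg_roots_def linear_neg[OF linear_coord])

lemma simple_subset_pos_roots: "\<Delta> \<subseteq> pos_roots"
  using simple_subset_roots by (auto simp: pos_roots_def coord_simple)

lemma refl_vec_simple_pos_root:
  assumes \<alpha>: "\<alpha> \<in> \<Delta>" and \<beta>: "\<beta> \<in> pos_roots" and "\<beta> \<noteq> \<alpha>"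
  shows "refl_vec \<alpha> \<beta> \<in> pos_roots"
proof -
  have "\<exists>\<gamma>\<in>\<Delta>. \<gamma> \<noteq> \<alpha> \<and> coord \<gamma> \<beta> > 0"
  proof (rule ccontr)
    assume "\<not> ?thesis"
    then have "\<forall>\<gamma>\<in>\<Delta>. \<gamma> \<noteq> \<alpha> \<longrightarrow> coord \<gamma> \<beta> = 0"
      using \<beta> unfolding pos_roots_def by force
    then have "(\<Sum>\<gamma>\<in>\<Delta>. coord \<gamma> \<beta> *\<^sub>R \<gamma>) = coord \<alpha> \<beta> *\<^sub>R \<alpha>"
      using \<alpha> finite_simple by (simp add: sum.remove)
    then have "\<beta> = coord \<alpha> \<beta> *\<^sub>R \<alpha>"
      by (simp add: simple_expansion)
    moreover have "coord \<alpha> \<beta> \<ge> 0"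
      using \<alpha> \<beta> unfolding pos_roots_def by blast
    ultimately have "\<beta> = \<alpha>"
      using root_multiple[of \<alpha> "coord \<alpha> \<beta>"] \<alpha> \<beta> simple_subset_roots
      unfolding pos_roots_def by force
    with \<open>\<beta> \<noteq> \<alpha>\<close> show False ..
  qed
  then obtain \<gamma> where "\<gamma> \<in> \<Delta>" "coord \<gamma> (refl_vec \<alpha> \<beta>) > 0"
    using \<alpha> coord_refl_vec by auto
  then have "refl_vec \<alpha> \<beta> \<notin> neg_roots"
    unfolding neg_roots_def by force
  moreover have "refl_vec \<alpha> \<beta> \<in> \<Phi>"
    using \<alpha> \<beta> simple_subset_roots refl_vec_root unfolding pos_roots_def by blast
  ultimately show ?thesis
    using root_pos_or_neg by blast
qed

lemma word_prod_root: "set ws \<subseteq> \<Delta> \<Longrightarrow> \<beta> \<in> \<Phi> \<Longrightarrow> word_prod ws \<beta> \<in> \<Phi>"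
proof (induction ws)
  case (Cons \<alpha> ws)
  then have "\<alpha> \<in> \<Phi>" and "word_prod ws \<beta> \<in> \<Phi>"
    using simple_subset_roots by auto
  then show ?case
    by (simp add: refl_vec_root)
qed simp

lemma refl_group_root: "w \<in> W \<Longrightarrow> \<beta> \<in> \<Phi> \<Longrightarrow> w \<beta> \<in> \<Phi>"
  by (erule refl_groupE) (simp add: word_prod_root)

lemma finite_pos_roots: "finite pos_roots"
  by (rule finite_subset[OF _ finite_roots]) (auto simp: pos_roots_def)

lemma refl_vec_simple_pos_roots_iff:
  assumes "\<alpha> \<in> \<Delta>"
  shows "refl_vec \<alpha> \<beta> \<in> pos_roots - {\<alpha>} \<longleftrightarrow> \<beta> \<in> pos_roots - {\<alpha>}"
proof -
  have \<alpha>0: "\<alpha> \<noteq> 0"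
    using assms zero_notin_simple by blast
  have *: "refl_vec \<alpha> \<gamma> \<in> pos_roots - {\<alpha>}" if "\<gamma> \<in> pos_roots - {\<alpha>}" for \<gamma>
  proof -
    have "refl_vec \<alpha> \<gamma> \<noteq> \<alpha>"
    proof
      assume "refl_vec \<alpha> \<gamma> = \<alpha>"
      then have "refl_vec \<alpha> (refl_vec \<alpha> \<gamma>) = refl_vec \<alpha> \<alpha>"
        by simp
      then have "\<gamma> = - \<alpha>"
        using \<alpha>0 by (simp add: refl_vec_self)
      then show False
        using that assms simple_subset_pos_roots pos_roots_inter_neg_roots uminus_pos_roots_iff
        by blast
    qed
    then show ?thesis
      using that refl_vec_simple_pos_root[OF assms] by blast
  qed
  show ?thesis
  proof
    assume "refl_vec \<alpha> \<beta> \<in> pos_roots - {\<alpha>}"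
    from *[OF this] show "\<beta> \<in> pos_roots - {\<alpha>}"
      using \<alpha>0 by simp
  qed (rule *)
qed

section \<open>Coxeter length as the number of inversions\<close>

definition inversions :: "('a \<Rightarrow> 'a) \<Rightarrow> 'a set" where
  "inversions w = {\<beta>\<in>pos_roots. w \<beta> \<in> neg_roots}"

lemma inversions_subset: "inversions w \<subseteq> pos_roots"
  by (auto simp: inversions_def)

lemma finite_inversions: "finite (inversions w)"
  using finite_pos_roots inversions_subset by (rule finite_subset[rotated])

lemma inversions_comp_refl_vec:
  assumes "\<alpha> \<in> \<Delta>"
  shows "inversions (w \<circ> refl_vec \<alpha>) - {\<alpha>} = refl_vec \<alpha> ` (inversions w - {\<alpha>})"
proof -
  have \<alpha>0: "\<alpha> \<noteq> 0"
    using assms zero_notin_simple by blast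
  have "\<beta> \<in> inversions (w \<circ> refl_vec \<alpha>) - {\<alpha>} \<longleftrightarrow> refl_vec \<alpha> \<beta> \<in> inversions w - {\<alpha>}" for \<beta>
    using refl_vec_simple_pos_roots_iff[OF assms, of \<beta>] unfolding inversions_def by auto
  then show ?thesis
    unfolding set_eq_iff mem_image_refl_vec_iff[OF \<alpha>0] by blast
qed

lemma card_inversions_comp_refl_vec:
  assumes w: "linear w" and \<alpha>: "\<alpha> \<in> \<Delta>"
  shows "w \<alpha> \<in> pos_roots \<Longrightarrow> card (inversions (w \<circ> refl_vec \<alpha>)) = card (inversions w) + 1"
    and "w \<alpha> \<in> neg_roots \<Longrightarrow> card (inversions (w \<circ> refl_vec \<alpha>)) + 1 = card (inversions w)"
proof -
  have \<alpha>0: "\<alpha> \<noteq> 0"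
    using \<alpha> zero_notin_simple by blast
  have card_eq: "card (inversions (w \<circ> refl_vec \<alpha>) - {\<alpha>}) = card (inversions w - {\<alpha>})"
    unfolding inversions_comp_refl_vec[OF \<alpha>]
    by (rule card_image, rule inj_on_inverseI[where g = "refl_vec \<alpha>"]) (simp add: \<alpha>0)
  have in_comp: "\<alpha> \<in> inversions (w \<circ> refl_vec \<alpha>) \<longleftrightarrow> w \<alpha> \<in> pos_roots"
    using \<alpha> simple_subset_pos_roots
    by (auto simp: inversions_def refl_vec_self[OF \<alpha>0] linear_neg[OF w] uminus_neg_roots_iff)
  have in_w: "\<alpha> \<in> inversions w \<longleftrightarrow> w \<alpha> \<in> neg_roots"
    using \<alpha> simple_subset_pos_roots by (auto simp: inversions_def)
  show "card (inversions (w \<circ> refl_vec \<alpha>)) = card (inversions w) + 1" if "w \<alpha> \<in> pos_roots"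
  proof -
    have "\<alpha> \<in> inversions (w \<circ> refl_vec \<alpha>)"
      using that in_comp by blast
    then have "card (inversions (w \<circ> refl_vec \<alpha>)) = Suc (card (inversions (w \<circ> refl_vec \<alpha>) - {\<alpha>}))"
      by (rule card.remove[OF finite_inversions])
    moreover have "inversions w - {\<alpha>} = inversions w"
      using that in_w pos_roots_inter_neg_roots by blast
    ultimately show ?thesis
      using card_eq by simp
  qed
  show "card (inversions (w \<circ> refl_vec \<alpha>)) + 1 = card (inversions w)" if "w \<alpha> \<in> neg_roots"
  proof -
    have "\<alpha> \<in> inversions w"
      using that in_w by blast
    then have "card (inversions w) = Suc (card (inversions w - {\<alpha>}))"
      by (rule card.remove[OF finite_inversions])
    moreover have "inversions (w \<circ> refl_vec \<alpha>) - {\<alpha>} = inversions (w \<circ> refl_vec \<alpha>)"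
      using that in_comp pos_roots_inter_neg_roots by blast
    ultimately show ?thesis
      using card_eq by simp
  qed
qed

lemma word_prod_simple_pos_or_neg:
  assumes "set ws \<subseteq> \<Delta>" and "\<alpha> \<in> \<Delta>"
  shows "word_prod ws \<alpha> \<in> pos_roots \<or> word_prod ws \<alpha> \<in> neg_roots"
  using assms simple_subset_roots by (intro root_pos_or_neg word_prod_root) auto

lemma card_inversions_word_prod_le: "set ws \<subseteq> \<Delta> \<Longrightarrow> card (inversions (word_prod ws)) \<le> length ws"
proof (induction ws rule: rev_induct)
  case Nil
  have "inversions (word_prod []) = {}"
    using pos_roots_inter_neg_roots unfolding inversions_def by auto
  then show ?case
    by (simp del: word_prod_Nil)
next
  case (snoc \<alpha> ws)
  then have ws: "set ws \<subseteq> \<Delta>" and \<alpha>: "\<alpha> \<in> \<Delta>"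
    by auto
  note card_step = card_inversions_comp_refl_vec[OF linear_word_prod \<alpha>, of ws, folded word_prod_snoc]
  from word_prod_simple_pos_or_neg[OF ws \<alpha>] show ?case
  proof
    assume "word_prod ws \<alpha> \<in> pos_roots"
    then show ?case
      using card_step(1) snoc.IH[OF ws] by simp
  next
    assume "word_prod ws \<alpha> \<in> neg_roots"
    then show ?case
      using card_step(2) snoc.IH[OF ws] by simp
  qed
qed

lemma deletion_word:
  "set ws \<subseteq> \<Delta> \<Longrightarrow> \<alpha> \<in> \<Delta> \<Longrightarrow> word_prod ws \<alpha> \<in> neg_roots \<Longrightarrow>
    \<exists>ws'. set ws' \<subseteq> \<Delta> \<and> length ws' + 1 = length ws \<and> word_prod ws' = word_prod ws \<circ> refl_vec \<alpha>"
proof (induction ws)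
  case Nil
  then have "\<alpha> \<in> pos_roots \<inter> neg_roots"
    using simple_subset_pos_roots by auto
  then show ?case
    using pos_roots_inter_neg_roots by blast
next
  case (Cons \<beta> ws)
  then have ws: "set ws \<subseteq> \<Delta>" and \<beta>: "\<beta> \<in> \<Delta>" and \<alpha>: "\<alpha> \<in> \<Delta>"
    by auto
  show ?case
  proof (cases "word_prod ws \<alpha> \<in> neg_roots")
    case True
    then obtain ws' where "set ws' \<subseteq> \<Delta>" "length ws' + 1 = length ws"
        "word_prod ws' = word_prod ws \<circ> refl_vec \<alpha>"
      using Cons.IH[OF ws \<alpha>] by blast
    then show ?thesis
      using \<beta> by (intro exI[of _ "\<beta> # ws'"]) (auto simp: comp_assoc)
  next
    case False
    then have pos: "word_prod ws \<alpha> \<in> pos_roots"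
      using word_prod_simple_pos_or_neg[OF ws \<alpha>] by blast
    \<comment> \<open>\<open>s\<^sub>\<beta>\<close> turns the positive root \<open>word_prod ws \<alpha>\<close> negative, so it is \<open>\<beta>\<close>;
      then \<open>word_prod ws \<circ> s\<^sub>\<alpha> = s\<^sub>\<beta> \<circ> word_prod ws\<close> cancels the first letter\<close>
    have w\<alpha>: "word_prod ws \<alpha> = \<beta>"
    proof (rule ccontr)
      assume "word_prod ws \<alpha> \<noteq> \<beta>"
      then have "refl_vec \<beta> (word_prod ws \<alpha>) \<in> pos_roots"
        using refl_vec_simple_pos_root[OF \<beta> pos] by blast
      then show False
        using Cons.prems(3) pos_roots_inter_neg_roots by auto
    qed
    have "0 \<notin> set ws" and "\<beta> \<noteq> 0"
      using ws \<beta> zero_notin_simple by auto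
    have "word_prod ws (refl_vec \<alpha> x) = refl_vec (word_prod ws \<alpha>) (word_prod ws x)" for x
      by (rule orthogonal_map_refl_vec[OF linear_word_prod inner_word_prod[OF \<open>0 \<notin> set ws\<close>]])
    then have conj: "word_prod ws (refl_vec \<alpha> x) = refl_vec \<beta> (word_prod ws x)" for x
      by (simp only: w\<alpha>)
    have "word_prod ws = word_prod (\<beta> # ws) \<circ> refl_vec \<alpha>"
      using \<open>\<beta> \<noteq> 0\<close> by (simp add: fun_eq_iff conj)
    moreover have "length ws + 1 = length (\<beta> # ws)"
      by simp
    ultimately show ?thesis
      using ws by blast
  qed
qed

lemma exists_word_length_le_card_inversions:
  "set ws \<subseteq> \<Delta> \<Longrightarrow>
    \<exists>ws'. set ws' \<subseteq> \<Delta> \<and> word_prod ws' = word_prod ws \<and> length ws' \<le> card (inversions (word_prod ws))"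
proof (induction ws rule: rev_induct)
  case Nil
  then show ?case
    by (intro exI[of _ "[]"]) simp
next
  case (snoc \<alpha> ws)
  then have ws: "set ws \<subseteq> \<Delta>" and \<alpha>: "\<alpha> \<in> \<Delta>"
    by auto
  obtain vs where vs: "set vs \<subseteq> \<Delta>" "word_prod vs = word_prod ws"
      "length vs \<le> card (inversions (word_prod ws))"
    using snoc.IH[OF ws] by blast
  note card_step = card_inversions_comp_refl_vec[OF linear_word_prod \<alpha>, of ws, folded word_prod_snoc]
  show ?case
  proof (cases "word_prod ws \<alpha> \<in> pos_roots")
    case True
    have "word_prod (vs @ [\<alpha>]) = word_prod (ws @ [\<alpha>])"
      by (simp only: word_prod_snoc vs(2))
    then show ?thesis
      using vs \<alpha> card_step(1)[OF True] by (intro exI[of _ "vs @ [\<alpha>]"]) auto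
  next
    case False
    then have neg: "word_prod ws \<alpha> \<in> neg_roots"
      using word_prod_simple_pos_or_neg[OF ws \<alpha>] by blast
    then obtain us where "set us \<subseteq> \<Delta>" "length us + 1 = length vs"
        "word_prod us = word_prod (ws @ [\<alpha>])"
      using deletion_word[OF vs(1) \<alpha>] vs(2) by (auto simp: word_prod_snoc)
    then show ?thesis
      using vs card_step(2)[OF neg] by (intro exI[of _ us]) auto
  qed
qed

lemma cox_len_eq_card_inversions:
  assumes "w \<in> W"
  shows "len w = card (inversions w)"
proof -
  obtain ws where ws: "set ws \<subseteq> \<Delta>" "length ws = len w" "w = word_prod ws"
    using assms by (rule exists_reduced_word)
  obtain vs where "set vs \<subseteq> \<Delta>" "word_prod vs = w" "length vs \<le> card (inversions w)"
    using exists_word_length_le_card_inversions[OF ws(1)] ws(3) by blast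
  then have "len w \<le> card (inversions w)"
    using cox_len_le_length[of vs \<Delta>] by simp
  moreover have "card (inversions w) \<le> len w"
    using card_inversions_word_prod_le[OF ws(1)] ws by simp
  ultimately show ?thesis
    by simp
qed

lemma
  assumes w: "w \<in> W" and \<alpha>: "\<alpha> \<in> \<Delta>"
  shows cox_len_comp_refl_vec_pos: "w \<alpha> \<in> pos_roots \<Longrightarrow> len (w \<circ> refl_vec \<alpha>) = len w + 1"
    and cox_len_comp_refl_vec_neg: "w \<alpha> \<in> neg_roots \<Longrightarrow> len (w \<circ> refl_vec \<alpha>) + 1 = len w"
proof -
  have "w \<circ> refl_vec \<alpha> \<in> W"
    using w \<alpha> by (simp add: comp_in_refl_group refl_vec_in_refl_group)
  then have len_eq: "len (w \<circ> refl_vec \<alpha>) = card (inversions (w \<circ> refl_vec \<alpha>))"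
      "len w = card (inversions w)"
    using w by (simp_all add: cox_len_eq_card_inversions)
  note card_step = card_inversions_comp_refl_vec[OF linear_refl_group[OF w] \<alpha>]
  show "len (w \<circ> refl_vec \<alpha>) = len w + 1" if "w \<alpha> \<in> pos_roots"
    unfolding len_eq by (rule card_step(1)[OF that])
  show "len (w \<circ> refl_vec \<alpha>) + 1 = len w" if "w \<alpha> \<in> neg_roots"
    unfolding len_eq by (rule card_step(2)[OF that])
qed

lemma neg_root_if_cox_len_comp_refl_vec_less:
  assumes w: "w \<in> W" and \<alpha>: "\<alpha> \<in> \<Delta>" and less: "len (w \<circ> refl_vec \<alpha>) < len w"
  shows "w \<alpha> \<in> neg_roots"
proof (rule ccontr)
  assume "w \<alpha> \<notin> neg_roots"
  then have "w \<alpha> \<in> pos_roots"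
    using root_pos_or_neg refl_group_root[OF w] \<alpha> simple_subset_roots by blast
  then show False
    using cox_len_comp_refl_vec_pos[OF w \<alpha>] less by simp
qed

section \<open>The longest element\<close>

lemma cox_len_comp_of_pos_to_neg:
  assumes w: "w \<in> W" "w ` pos_roots \<subseteq> neg_roots" and v: "v \<in> W"
  shows "len (w \<circ> v) + len v = card pos_roots"
proof -
  have "\<beta> \<in> inversions (w \<circ> v) \<longleftrightarrow> \<beta> \<notin> inversions v" if \<beta>: "\<beta> \<in> pos_roots" for \<beta>
  proof (cases "v \<beta> \<in> pos_roots")
    case True
    then show ?thesis
      using \<beta> w(2) pos_roots_inter_neg_roots by (auto simp: inversions_def)
  next
    case False
    then have v\<beta>: "v \<beta> \<in> neg_roots"
      using \<beta> root_pos_or_neg refl_group_root[OF v] unfolding pos_roots_def by blast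
    then have "- v \<beta> \<in> pos_roots"
      by (simp add: uminus_pos_roots_iff)
    then have "w (- v \<beta>) \<in> neg_roots"
      using w(2) by blast
    then have "- w (v \<beta>) \<in> neg_roots"
      by (simp add: linear_neg[OF linear_refl_group[OF w(1)]])
    then have "w (v \<beta>) \<in> pos_roots"
      by (simp add: uminus_neg_roots_iff)
    then show ?thesis
      using \<beta> v\<beta> pos_roots_inter_neg_roots by (auto simp: inversions_def)
  qed
  then have "inversions (w \<circ> v) = pos_roots - inversions v"
    using inversions_subset by blast
  then have "card (inversions (w \<circ> v)) + card (inversions v) = card pos_roots"
    using card_Diff_subset[OF finite_inversions inversions_subset]
      card_mono[OF finite_pos_roots inversions_subset] by simp
  then show ?thesis
    using w(1) v by (simp add: cox_len_eq_card_inversions comp_in_refl_group)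
qed

lemma pos_to_neg_if_cox_len_maximal:
  assumes w: "w \<in> W" and maximal: "\<And>v. v \<in> W \<Longrightarrow> len v \<le> len w"
  shows "w ` pos_roots \<subseteq> neg_roots"
proof -
  have simple: "w \<alpha> \<in> neg_roots" if \<alpha>: "\<alpha> \<in> \<Delta>" for \<alpha>
  proof (rule ccontr)
    assume "w \<alpha> \<notin> neg_roots"
    then have "len (w \<circ> refl_vec \<alpha>) = len w + 1"
      using cox_len_comp_refl_vec_pos[OF w \<alpha>] root_pos_or_neg refl_group_root[OF w] \<alpha>
        simple_subset_roots by blast
    moreover have "w \<circ> refl_vec \<alpha> \<in> W"
      using w \<alpha> by (simp add: comp_in_refl_group refl_vec_in_refl_group)
    ultimately show False
      using maximal[of "w \<circ> refl_vec \<alpha>"] by simp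
  qed
  have "w \<beta> \<in> neg_roots" if \<beta>: "\<beta> \<in> pos_roots" for \<beta>
  proof -
    have "coord \<delta> (w \<beta>) \<le> 0" if "\<delta> \<in> \<Delta>" for \<delta>
    proof -
      have "w \<beta> = w (\<Sum>\<gamma>\<in>\<Delta>. coord \<gamma> \<beta> *\<^sub>R \<gamma>)"
        by (simp add: simple_expansion)
      also have "\<dots> = (\<Sum>\<gamma>\<in>\<Delta>. coord \<gamma> \<beta> *\<^sub>R w \<gamma>)"
        using linear_refl_group[OF w] by (simp add: linear_sum linear_scale)
      finally have "w \<beta> = (\<Sum>\<gamma>\<in>\<Delta>. coord \<gamma> \<beta> *\<^sub>R w \<gamma>)" .
      then have "coord \<delta> (w \<beta>) = (\<Sum>\<gamma>\<in>\<Delta>. coord \<gamma> \<beta> * coord \<delta> (w \<gamma>))"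
        by (simp add: linear_sum[OF linear_coord] linear_scale[OF linear_coord])
      also have "\<dots> \<le> 0"
        using \<beta> simple \<open>\<delta> \<in> \<Delta>\<close> unfolding pos_roots_def neg_roots_def
        by (intro sum_nonpos mult_nonneg_nonpos) auto
      finally show ?thesis .
    qed
    then show ?thesis
      using refl_group_root[OF w] \<beta> unfolding pos_roots_def neg_roots_def by blast
  qed
  then show ?thesis
    by blast
qed

lemma pos_to_neg_unique:
  assumes w: "w \<in> W" "w ` pos_roots \<subseteq> neg_roots"
    and w': "w' \<in> W" "w' ` pos_roots \<subseteq> neg_roots"
  shows "w' = w"
proof -
  define v where "v = inv w \<circ> w'"
  have v: "v \<in> W"
    unfolding v_def using w(1) w'(1) zero_notin_simple
    by (simp add: comp_in_refl_group inv_in_refl_group)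
  have wv: "w \<circ> v = w'"
    unfolding v_def using bij_refl_group[OF zero_notin_simple w(1)]
    by (simp add: fun_eq_iff bij_is_surj surj_f_inv_f)
  have "len w' + len v = card pos_roots"
    using cox_len_comp_of_pos_to_neg[OF w v] unfolding wv .
  moreover have "len w' = card pos_roots"
    using cox_len_comp_of_pos_to_neg[OF w' id_in_refl_group] by (simp add: cox_len_id)
  ultimately have "v = id"
    using cox_len_eq_0D[OF v] by simp
  with wv show ?thesis
    by simp
qed

lemma exists_cox_len_maximal: "\<exists>w\<in>W. \<forall>v\<in>W. len v \<le> len w"
proof -
  have "len w \<le> card pos_roots" if "w \<in> W" for w
    using cox_len_eq_card_inversions[OF that] card_mono[OF finite_pos_roots inversions_subset]
    by simp
  then have "len ` W \<subseteq> {..card pos_roots}"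
    by auto
  then have fin: "finite (len ` W)"
    by (rule finite_subset) simp
  moreover have "len ` W \<noteq> {}"
    using id_in_refl_group by blast
  ultimately have "Max (len ` W) \<in> len ` W"
    by (rule Max_in)
  then obtain w where w: "w \<in> W" and "len w = Max (len ` W)"
    by (metis imageE)
  then have "\<forall>v\<in>W. len v \<le> len w"
    using Max_ge[OF fin] by simp
  with w show ?thesis
    by blast
qed

lemma
  shows longest_in_refl_group: "longest \<Delta> \<in> W"
    and cox_len_le_longest: "v \<in> W \<Longrightarrow> len v \<le> len (longest \<Delta>)"
    and longest_pos_to_neg: "longest \<Delta> ` pos_roots \<subseteq> neg_roots"
proof -
  obtain w0 where w0: "w0 \<in> W" and maximal: "\<And>v. v \<in> W \<Longrightarrow> len v \<le> len w0"
    using exists_cox_len_maximal by blast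
  have w0_pos_neg: "w0 ` pos_roots \<subseteq> neg_roots"
    using w0 maximal by (rule pos_to_neg_if_cox_len_maximal)
  have "longest \<Delta> = w0"
    unfolding longest_def
  proof (rule the_equality)
    show "w0 \<in> W \<and> (\<forall>v\<in>W. len v \<le> len w0)"
      using w0 maximal by blast
  next
    fix w
    assume w: "w \<in> W \<and> (\<forall>v\<in>W. len v \<le> len w)"
    then have "w ` pos_roots \<subseteq> neg_roots"
      by (intro pos_to_neg_if_cox_len_maximal) auto
    with w show "w = w0"
      using pos_to_neg_unique[OF w0 w0_pos_neg] by blast
  qed
  with w0 maximal w0_pos_neg
  show "longest \<Delta> \<in> W" "v \<in> W \<Longrightarrow> len v \<le> len (longest \<Delta>)"
    "longest \<Delta> ` pos_roots \<subseteq> neg_roots"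
    by simp_all
qed

lemma cox_len_longest: "len (longest \<Delta>) = card pos_roots"
  using cox_len_comp_of_pos_to_neg[OF longest_in_refl_group longest_pos_to_neg id_in_refl_group]
  by (simp add: cox_len_id)

lemma cox_len_longest_comp: "v \<in> W \<Longrightarrow> len (longest \<Delta> \<circ> v) + len v = len (longest \<Delta>)"
  using cox_len_comp_of_pos_to_neg[OF longest_in_refl_group longest_pos_to_neg]
  by (simp add: cox_len_longest)

lemma cox_len_comp_longest:
  assumes v: "v \<in> W"
  shows "len (v \<circ> longest \<Delta>) + len v = len (longest \<Delta>)"
proof -
  let ?w0 = "longest \<Delta>"
  note inv_W = inv_in_refl_group[OF zero_notin_simple] and bij_W = bij_refl_group[OF zero_notin_simple]
  have "inv ?w0 ` pos_roots \<subseteq> neg_roots"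
    using inv_W[OF longest_in_refl_group] cox_len_le_longest
    by (intro pos_to_neg_if_cox_len_maximal)
      (simp_all add: cox_len_inv[OF zero_notin_simple longest_in_refl_group])
  then have "len (inv ?w0 \<circ> inv v) + len (inv v) = len ?w0"
    using cox_len_comp_of_pos_to_neg inv_W[OF longest_in_refl_group] inv_W[OF v]
    by (simp add: cox_len_longest)
  moreover have "inv ?w0 \<circ> inv v = inv (v \<circ> ?w0)"
    using o_inv_distrib[OF bij_W[OF v] bij_W[OF longest_in_refl_group]] by simp
  ultimately show ?thesis
    using v longest_in_refl_group
    by (simp add: cox_len_inv[OF zero_notin_simple] comp_in_refl_group)
qed

section \<open>Parabolic subgroups and splittings\<close>

lemma coord_refl_group_notin:
  assumes "J \<subseteq> \<Delta>" and "w \<in> refl_group J" and "\<gamma> \<notin> J"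
  shows "coord \<gamma> (w v) = coord \<gamma> v"
proof -
  obtain ws where "set ws \<subseteq> J" and "w = word_prod ws"
    using assms(2) by (rule refl_groupE)
  moreover have "coord \<gamma> (word_prod ws v) = coord \<gamma> v" if "set ws \<subseteq> J" for ws
    using that
  proof (induction ws)
    case (Cons \<alpha> ws)
    then have "\<alpha> \<in> \<Delta>" and "\<gamma> \<noteq> \<alpha>"
      using assms(1,3) by auto
    with Cons show ?case
      by (simp add: coord_refl_vec)
  qed simp
  ultimately show ?thesis
    by blast
qed

lemma reduced_word_in_parabolic:
  assumes J: "J \<subseteq> \<Delta>"
  shows "set ws \<subseteq> \<Delta> \<Longrightarrow> word_prod ws \<in> refl_group J \<Longrightarrow> len (word_prod ws) = length ws \<Longrightarrow>
    set ws \<subseteq> J"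
proof (induction ws rule: rev_induct)
  case (snoc \<alpha> ws)
  let ?w = "word_prod (ws @ [\<alpha>])"
  have ws: "set ws \<subseteq> \<Delta>" and \<alpha>: "\<alpha> \<in> \<Delta>"
    using snoc.prems(1) by auto
  have w: "?w \<in> W"
    using snoc.prems(2) refl_group_mono[OF J] by blast
  have "\<alpha> \<noteq> 0"
    using \<alpha> zero_notin_simple by blast
  then have w_refl: "?w \<circ> refl_vec \<alpha> = word_prod ws"
    by (simp add: word_prod_snoc comp_assoc refl_vec_comp_self)
  have "len (?w \<circ> refl_vec \<alpha>) < len ?w"
    using cox_len_le_length[OF ws] snoc.prems(3) by (simp add: w_refl)
  then have neg: "?w \<alpha> \<in> neg_roots"
    by (rule neg_root_if_cox_len_comp_refl_vec_less[OF w \<alpha>])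
  have "\<alpha> \<in> J"
  proof (rule ccontr)
    assume "\<alpha> \<notin> J"
    then have "coord \<alpha> (?w \<alpha>) = 1"
      using coord_refl_group_notin[OF J snoc.prems(2)] coord_simple[OF \<alpha>] by simp
    with neg \<alpha> show False
      unfolding neg_roots_def by force
  qed
  then have "word_prod ws \<in> refl_group J"
    using snoc.prems(2) w_refl by (metis comp_in_refl_group refl_vec_in_refl_group)
  moreover have "len (word_prod ws) = length ws"
    using cox_len_comp_refl_vec_neg[OF w \<alpha> neg] snoc.prems(3) by (simp add: w_refl)
  ultimately have "set ws \<subseteq> J"
    using snoc.IH ws by blast
  with \<open>\<alpha> \<in> J\<close> show ?case
    by simp
qed simp

lemma splitting_parabolic:
  assumes split: "splitting W len X Y" and J: "J \<subseteq> \<Delta>"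
  shows "splitting (refl_group J) len (X \<inter> refl_group J) (Y \<inter> refl_group J)"
proof -
  let ?mult = "\<lambda>(x, y). x \<circ> y" and ?X = "X \<inter> refl_group J" and ?Y = "Y \<inter> refl_group J"
  have X: "X \<subseteq> W" and Y: "Y \<subseteq> W" and bij: "bij_betw ?mult (X \<times> Y) W"
    and len_add: "\<And>x y. x \<in> X \<Longrightarrow> y \<in> Y \<Longrightarrow> len (x \<circ> y) = len x + len y"
    using split unfolding splitting_def by blast+
  have "w \<in> ?mult ` (?X \<times> ?Y)" if w: "w \<in> refl_group J" for w
  proof -
    have "w \<in> ?mult ` (X \<times> Y)"
      using w refl_group_mono[OF J] bij_betw_imp_surj_on[OF bij] by blast
    then obtain x y where xy: "x \<in> X" "y \<in> Y" "w = x \<circ> y"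
      by auto
    obtain xs where xs: "set xs \<subseteq> \<Delta>" "length xs = len x" "x = word_prod xs"
      using X xy(1) by (meson subsetD exists_reduced_word)
    obtain ys where ys: "set ys \<subseteq> \<Delta>" "length ys = len y" "y = word_prod ys"
      using Y xy(2) by (meson subsetD exists_reduced_word)
    have xs_ys: "word_prod (xs @ ys) = w"
      using xs ys xy by (simp add: word_prod_append)
    have "set (xs @ ys) \<subseteq> J"
    proof (rule reduced_word_in_parabolic[OF J])
      show "set (xs @ ys) \<subseteq> \<Delta>"
        using xs ys by simp
      show "word_prod (xs @ ys) \<in> refl_group J"
        using xs_ys w by simp
      show "len (word_prod (xs @ ys)) = length (xs @ ys)"
        using xs_ys xy len_add xs ys by simp
    qed
    then have "x \<in> refl_group J" and "y \<in> refl_group J"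
      using xs(3) ys(3) by (simp_all add: word_prod_in_refl_group)
    with xy show ?thesis
      by auto
  qed
  moreover have "?mult ` (?X \<times> ?Y) \<subseteq> refl_group J"
    by (auto simp: comp_in_refl_group)
  ultimately have "?mult ` (?X \<times> ?Y) = refl_group J"
    by blast
  moreover have "inj_on ?mult (?X \<times> ?Y)"
    using bij_betw_imp_inj_on[OF bij] by (rule inj_on_subset) blast
  ultimately show ?thesis
    unfolding splitting_def bij_betw_def using len_add by blast
qed

lemma splitting_left_weak_greatest:
  assumes split: "splitting W len X Y"
    and xy0: "x0 \<in> X" "y0 \<in> Y" "x0 \<circ> y0 = longest \<Delta>" and x: "x \<in> X"
  shows "left_weak \<Delta> x x0"
proof -
  have X: "X \<subseteq> W" and Y: "Y \<subseteq> W"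
    and len_add: "\<And>x y. x \<in> X \<Longrightarrow> y \<in> Y \<Longrightarrow> len (x \<circ> y) = len x + len y"
    using split unfolding splitting_def by blast+
  note inv_W = inv_in_refl_group[OF zero_notin_simple] and bij_W = bij_refl_group[OF zero_notin_simple]
  have xW: "x \<in> W" and x0W: "x0 \<in> W" and y0W: "y0 \<in> W"
    using X Y x xy0(1,2) by blast+
  have xy0W: "x \<circ> y0 \<in> W"
    using xW y0W by (rule comp_in_refl_group)
  define z where "z = x0 \<circ> inv x"
  have zW: "z \<in> W"
    unfolding z_def using x0W inv_W[OF xW] by (rule comp_in_refl_group)
  have "x0 = z \<circ> x"
    unfolding z_def using bij_W[OF xW] by (simp add: fun_eq_iff bij_is_inj)
  moreover have "longest \<Delta> \<circ> inv (x \<circ> y0) = z"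
    unfolding z_def xy0(3)[symmetric] o_inv_distrib[OF bij_W[OF xW] bij_W[OF y0W]]
    using bij_W[OF y0W] by (simp add: fun_eq_iff bij_is_surj surj_f_inv_f)
  then have "len z + len (inv (x \<circ> y0)) = len (longest \<Delta>)"
    using cox_len_longest_comp[OF inv_W[OF xy0W]] by simp
  then have "len x0 = len z + len x"
    using len_add[OF x xy0(2)] len_add[OF xy0(1,2)] xy0(3)
      cox_len_inv[OF zero_notin_simple xy0W] by simp
  ultimately show ?thesis
    unfolding left_weak_def using zW by blast
qed

lemma splitting_right_weak_greatest:
  assumes split: "splitting W len X Y"
    and xy0: "x0 \<in> X" "y0 \<in> Y" "x0 \<circ> y0 = longest \<Delta>" and y: "y \<in> Y"
  shows "right_weak \<Delta> y y0"
proof -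
  have X: "X \<subseteq> W" and Y: "Y \<subseteq> W"
    and len_add: "\<And>x y. x \<in> X \<Longrightarrow> y \<in> Y \<Longrightarrow> len (x \<circ> y) = len x + len y"
    using split unfolding splitting_def by blast+
  note inv_W = inv_in_refl_group[OF zero_notin_simple] and bij_W = bij_refl_group[OF zero_notin_simple]
  have yW: "y \<in> W" and x0W: "x0 \<in> W" and y0W: "y0 \<in> W"
    using X Y y xy0(1,2) by blast+
  have x0yW: "x0 \<circ> y \<in> W"
    using x0W yW by (rule comp_in_refl_group)
  define z where "z = inv y \<circ> y0"
  have zW: "z \<in> W"
    unfolding z_def using inv_W[OF yW] y0W by (rule comp_in_refl_group)
  have "y0 = y \<circ> z"
    unfolding z_def using bij_W[OF yW] by (simp add: fun_eq_iff bij_is_surj surj_f_inv_f)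
  moreover have "inv (x0 \<circ> y) \<circ> longest \<Delta> = z"
    unfolding z_def xy0(3)[symmetric] o_inv_distrib[OF bij_W[OF x0W] bij_W[OF yW]]
    using bij_W[OF x0W] by (simp add: fun_eq_iff bij_is_inj)
  then have "len z + len (inv (x0 \<circ> y)) = len (longest \<Delta>)"
    using cox_len_comp_longest[OF inv_W[OF x0yW]] by simp
  then have "len y0 = len y + len z"
    using len_add[OF xy0(1) y] len_add[OF xy0(1,2)] xy0(3)
      cox_len_inv[OF zero_notin_simple x0yW] by simp
  ultimately show ?thesis
    unfolding right_weak_def using zW by blast
qed

lemma splitting_maximal_factors:
  assumes split: "splitting W len X Y"
  obtains x0 y0 where "x0 \<circ> y0 = longest \<Delta>"
    and "\<And>x. x \<in> X \<and> (\<forall>x'\<in>X. left_weak \<Delta> x x' \<longrightarrow> x' = x) \<longleftrightarrow> x = x0"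
    and "\<And>y. y \<in> Y \<and> (\<forall>y'\<in>Y. right_weak \<Delta> y y' \<longrightarrow> y' = y) \<longleftrightarrow> y = y0"
proof -
  have "longest \<Delta> \<in> (\<lambda>(x, y). x \<circ> y) ` (X \<times> Y)"
    using split longest_in_refl_group unfolding splitting_def bij_betw_def by blast
  then obtain x0 y0 where xy0: "x0 \<in> X" "y0 \<in> Y" "x0 \<circ> y0 = longest \<Delta>"
    by auto
  have "x \<in> X \<and> (\<forall>x'\<in>X. left_weak \<Delta> x x' \<longrightarrow> x' = x) \<longleftrightarrow> x = x0" for x
    using xy0(1) splitting_left_weak_greatest[OF split xy0] left_weak_antisym
    by (rule maximal_iff_eq_greatest[where R = "left_weak \<Delta>"])
  moreover have "y \<in> Y \<and> (\<forall>y'\<in>Y. right_weak \<Delta> y y' \<longrightarrow> y' = y) \<longleftrightarrow> y = y0" for y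
    using xy0(2) splitting_right_weak_greatest[OF split xy0] right_weak_antisym
    by (rule maximal_iff_eq_greatest[where R = "right_weak \<Delta>"])
  ultimately show ?thesis
    by (rule that[OF xy0(3)])
qed

end

theorem proposition6p1:
  fixes \<Phi> \<Delta> :: "'a::euclidean_space set"
    and X Y :: "('a \<Rightarrow> 'a) set"
  assumes "root_system \<Phi>"
    and "simple_roots \<Phi> \<Delta>"
    and "splitting (refl_group \<Delta>) (cox_len \<Delta>) X Y"
  shows "(\<exists>!x0. x0 \<in> X \<and> (\<forall>x\<in>X. left_weak \<Delta> x0 x \<longrightarrow> x = x0))
    \<and> (\<exists>!y0. y0 \<in> Y \<and> (\<forall>y\<in>Y. right_weak \<Delta> y0 y \<longrightarrow> y = y0))
    \<and> (\<forall>x0 y0. x0 \<in> X \<and> (\<forall>x\<in>X. left_weak \<Delta> x0 x \<longrightarrow> x = x0)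
          \<and> y0 \<in> Y \<and> (\<forall>y\<in>Y. right_weak \<Delta> y0 y \<longrightarrow> y = y0)
          \<longrightarrow> x0 \<circ> y0 = longest \<Delta>)
    \<and> (\<forall>J\<subseteq>\<Delta>. splitting (refl_group J) (cox_len \<Delta>) (X \<inter> refl_group J) (Y \<inter> refl_group J))"
proof -
  interpret based_root_system \<Phi> \<Delta>
    using assms(1,2) by unfold_locales
  obtain x0 y0 where factors: "x0 \<circ> y0 = longest \<Delta>"
    and maximal_X: "\<And>x. x \<in> X \<and> (\<forall>x'\<in>X. left_weak \<Delta> x x' \<longrightarrow> x' = x) \<longleftrightarrow> x = x0"
    and maximal_Y: "\<And>y. y \<in> Y \<and> (\<forall>y'\<in>Y. right_weak \<Delta> y y' \<longrightarrow> y' = y) \<longleftrightarrow> y = y0"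
    using assms(3) by (rule splitting_maximal_factors) (rule that)
  show ?thesis
  proof (intro conjI)
    show "\<exists>!x0. x0 \<in> X \<and> (\<forall>x\<in>X. left_weak \<Delta> x0 x \<longrightarrow> x = x0)"
      unfolding maximal_X by simp
    show "\<exists>!y0. y0 \<in> Y \<and> (\<forall>y\<in>Y. right_weak \<Delta> y0 y \<longrightarrow> y = y0)"
      unfolding maximal_Y by simp
    show "\<forall>x0 y0. x0 \<in> X \<and> (\<forall>x\<in>X. left_weak \<Delta> x0 x \<longrightarrow> x = x0)
        \<and> y0 \<in> Y \<and> (\<forall>y\<in>Y. right_weak \<Delta> y0 y \<longrightarrow> y = y0) \<longrightarrow> x0 \<circ> y0 = longest \<Delta>"
    proof (intro allI impI)
      fix x y
      assume "x \<in> X \<and> (\<forall>x'\<in>X. left_weak \<Delta> x x' \<longrightarrow> x' = x)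
        \<and> y \<in> Y \<and> (\<forall>y'\<in>Y. right_weak \<Delta> y y' \<longrightarrow> y' = y)"
      then have "x = x0" and "y = y0"
        unfolding maximal_X[symmetric] maximal_Y[symmetric] by blast+
      with factors show "x \<circ> y = longest \<Delta>"
        by simp
    qed
  qed (use splitting_parabolic[OF assms(3)] in blast)
qed

end
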